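(* Let $0<\epsilon<1$ and let $C_1,\ldots,C_n\in\mathbb{R}^3$ be a Pareto-optimal market for $\textsc{ProductDesign}(2)$. Let $r=\max\{\operatorname{ppu}(C_i): i\in\{1,\ldots,n\}\}$, $E=1/(1-\epsilon)$, $\ell=\lceil\log_E n\rceil$, and for $i\in\{0,\ldots,\ell\}$ let $H_i=\{(p,q_1,q_2)\in\mathbb{R}^3: p-q_1-q_2=r(1-\epsilon)^i\}$. Then for every product $P^*=(p^*,q_1^*,q_2^* )\in\mathbb{R}^3$ there exists a product $P\in H_i$ for some $i\in\{0,\ldots,\ell\}$ with $\operatorname{profit}(P)\ge(1-\epsilon)\operatorname{profit}(P^* )$.
   Context: A product $P=(p,q_1,q_2)$ has price $p$ and qualities $q_1,q_2$; its profit per unit is $\operatorname{ppu}(P)=p-q_1-q_2$. A customer $C_i=(p_i,q_{i,1},q_{i,2})$ buys $P$ iff $p\le p_i$ and $q_j\ge q_{i,j}$ for $j=1,2$. $\operatorname{profit}(P)=\operatorname{ppu}(P)\cdot|\{i: C_i \text{ buys } P\}|$. The market is Pareto-optimal: there are no two customers $C_i,C_j$ with $q_{i,k}>q_{j,k}$ for all $k$ and $p_i<p_j$. *)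

theory Defs
  imports Complex_Main
begin

type_synonym point3 = "real \<times> real \<times> real"  (* (price, quality 1, quality 2) *)

definition ppu :: "point3 \<Rightarrow> real" where
  "ppu P = (case P of (p, q1, q2) \<Rightarrow> p - q1 - q2)"

definition buys :: "point3 \<Rightarrow> point3 \<Rightarrow> bool" where
  "buys Ci P = (case Ci of (pc, qi1, qi2) \<Rightarrow> case P of (p, q1, q2) \<Rightarrow>
      p \<le> pc \<and> q1 \<ge> qi1 \<and> q2 \<ge> qi2)"

definition profit :: "(nat \<Rightarrow> point3) \<Rightarrow> nat \<Rightarrow> point3 \<Rightarrow> real" where
  "profit C n P = ppu P * real (card {i \<in> {1..n}. buys (C i) P})"

definition pareto_optimal :: "(nat \<Rightarrow> point3) \<Rightarrow> nat \<Rightarrow> bool" where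
  "pareto_optimal C n = (\<not> (\<exists>i\<in>{1..n}. \<exists>j\<in>{1..n}.
      fst (snd (C i)) > fst (snd (C j)) \<and> snd (snd (C i)) > snd (snd (C j)) \<and>
      fst (C i) < fst (C j)))"

end

theory Submission
  imports Defs
begin

text \<open>
  Let \<open>P\<^sup>*\<close> have positive profit. A buyer \<open>C\<^sub>k\<close> of
  \<open>P\<^sup>*\<close> pays at least \<open>ppu P\<^sup>*\<close>, so \<open>ppu P\<^sup>* \<le> r\<close>. If \<open>ppu P\<^sup>*\<close> is above the lowest
  level \<open>r(1-\<epsilon>)\<^sup>\<ell>\<close>, lowering the price of \<open>P\<^sup>*\<close> to the next level below keeps all
  buyers and loses at most a factor \<open>1-\<epsilon>\<close> per unit. Otherwise
  \<open>profit P\<^sup>* \<le> n r (1-\<epsilon>)\<^sup>\<ell> \<le> r\<close>, and the customer attaining \<open>r\<close>, offered as a product,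
  already earns \<open>r\<close>. Products of non-positive profit are beaten by any product
  nobody buys.
\<close>

abbreviation buyers :: "(nat \<Rightarrow> point3) \<Rightarrow> nat \<Rightarrow> point3 \<Rightarrow> nat set" where
  "buyers C n P \<equiv> {i \<in> {1..n}. buys (C i) P}"

lemma card_buyers_le: "card (buyers C n P) \<le> n"
proof -
  have "card (buyers C n P) \<le> card {1..n}" by (rule card_mono) auto
  then show ?thesis by simp
qed

lemma ppu_le_ppu_of_buyer: "buys c P \<Longrightarrow> ppu P \<le> ppu c"
  unfolding buys_def ppu_def by (cases c, cases P) auto

lemma buyers_antimono_price:
  "p' \<le> p \<Longrightarrow> buyers C n (p, q1, q2) \<subseteq> buyers C n (p', q1, q2)"
  unfolding buys_def by (auto split: prod.splits)

lemma profit_le_ppu_mult_n: "0 \<le> ppu P \<Longrightarrow> profit C n P \<le> ppu P * real n"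
  unfolding profit_def using card_buyers_le by (intro mult_left_mono) auto

lemma ppu_le_profit_of_customer:
  assumes "i \<in> {1..n}" and "0 \<le> ppu (C i)"
  shows "ppu (C i) \<le> profit C n (C i)"
proof -
  have "i \<in> buyers C n (C i)"
    using assms(1) unfolding buys_def by (cases "C i") auto
  then have "1 \<le> card (buyers C n (C i))"
    by (simp add: Suc_le_eq card_gt_0_iff) blast
  then have "ppu (C i) * 1 \<le> ppu (C i) * real (card (buyers C n (C i)))"
    using assms(2) by (intro mult_left_mono) auto
  then show ?thesis
    unfolding profit_def by simp
qed

lemma exists_unsold_product: "\<exists>P. ppu P = x \<and> profit C n P = 0"
proof -
  define q where "q = Min (fst ` snd ` C ` {1..n}) - 1"
  have "\<not> buys (C i) (x + q, q, 0)" if "i \<in> {1..n}" for i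
  proof -
    have "Min (fst ` snd ` C ` {1..n}) \<le> fst (snd (C i))"
      using that by (intro Min_le) auto
    then have "q < fst (snd (C i))" unfolding q_def by simp
    then show ?thesis unfolding buys_def by (auto split: prod.splits)
  qed
  then have "profit C n (x + q, q, 0) = 0"
    unfolding profit_def by simp
  moreover have "ppu (x + q, q, 0) = x"
    unfolding ppu_def by simp
  ultimately show ?thesis by blast
qed

lemma pow_nat_ceiling_log_inverse_le:
  fixes a x :: real
  assumes "0 < a" and "a < 1" and "0 < x"
  shows "a ^ nat \<lceil>log (1 / a) x\<rceil> * x \<le> 1"
proof -
  define L where "L = nat \<lceil>log (1 / a) x\<rceil>"
  have base: "1 < 1 / a" using assms by simp
  have "x = (1 / a) powr log (1 / a) x"
    by (rule powr_log_cancel[symmetric]) (use base assms in auto)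
  also have "\<dots> \<le> (1 / a) powr real L"
    using base unfolding L_def by (intro powr_mono) linarith+
  also have "\<dots> = (1 / a) ^ L" using assms(1) by (simp add: powr_realpow)
  finally have "a ^ L * x \<le> a ^ L * (1 / a) ^ L"
    using assms(1) by (intro mult_left_mono) auto
  also have "\<dots> = 1" using assms(1) by (simp add: power_one_over)
  finally show ?thesis unfolding L_def .
qed

lemma geometric_level_between:
  fixes a x r :: real
  assumes "0 < a" and "a < 1" and "0 \<le> x" and "x \<le> r" and "r * a ^ L \<le> x"
  shows "\<exists>i\<le>L. a * x \<le> r * a ^ i \<and> r * a ^ i \<le> x"
proof -
  define i where "i = (LEAST i. r * a ^ i \<le> x)"
  have below: "r * a ^ i \<le> x" and "i \<le> L"
    unfolding i_def using assms(5) by (auto intro: LeastI Least_le)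
  moreover have "a * x \<le> r * a ^ i"
  proof (cases i)
    case 0
    have "a * x \<le> x" using assms by (intro mult_left_le_one_le) auto
    then show ?thesis using 0 assms(4) by simp
  next
    case (Suc m)
    then have "x < r * a ^ m"
      using not_less_Least[of m "\<lambda>i. r * a ^ i \<le> x"] unfolding i_def by simp
    then show ?thesis
      using Suc assms(1) by (simp add: algebra_simps)
  qed
  ultimately show ?thesis by blast
qed

lemma lower_price_profit_ge:
  fixes a y :: real
  assumes "0 \<le> a" and "a * ppu P \<le> y" and "y \<le> ppu P" and "0 \<le> y"
  shows "\<exists>P'. ppu P' = y \<and> a * profit C n P \<le> profit C n P'"
proof -
  obtain p q1 q2 where P: "P = (p, q1, q2)" by (cases P)
  define P' where "P' = (p - (ppu P - y), q1, q2)"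
  have ppu_P': "ppu P' = y"
    unfolding P'_def P by (simp add: ppu_def)
  have "buyers C n P \<subseteq> buyers C n P'"
    unfolding P'_def P by (rule buyers_antimono_price) (use assms(3) P in simp)
  then have more_buyers: "card (buyers C n P) \<le> card (buyers C n P')"
    by (intro card_mono) auto
  have "a * profit C n P = a * ppu P * real (card (buyers C n P))"
    unfolding profit_def by simp
  also have "\<dots> \<le> y * real (card (buyers C n P'))"
    using assms(2,4) more_buyers by (intro mult_mono) auto
  also have "\<dots> = profit C n P'"
    unfolding profit_def ppu_P' ..
  finally show ?thesis using ppu_P' by blast
qed

lemma profitable_product_approx_on_levels:
  fixes a :: real
  assumes "0 < a" and "a < 1" and "a ^ L * real n \<le> 1"
    and r: "r = Max (ppu ` C ` {1..n})"
    and profitable: "0 < profit C n P"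
  shows "\<exists>i\<le>L. \<exists>P'. ppu P' = r * a ^ i \<and> a * profit C n P \<le> profit C n P'"
proof -
  have ppu_pos: "0 < ppu P"
    using profitable unfolding profit_def by (simp add: zero_less_mult_iff)
  have "buyers C n P \<noteq> {}"
    using profitable unfolding profit_def by (metis card.empty mult_zero_right of_nat_0 less_irrefl)
  then obtain k where k: "k \<in> {1..n}" "buys (C k) P" by auto
  have "ppu (C k) \<le> r"
    unfolding r by (rule Max_ge) (use k(1) in auto)
  then have ppu_le_r: "ppu P \<le> r"
    using ppu_le_ppu_of_buyer[OF k(2)] by simp
  show ?thesis
  proof (cases "r * a ^ L \<le> ppu P")
    case True
    then obtain i where "i \<le> L" "a * ppu P \<le> r * a ^ i" "r * a ^ i \<le> ppu P"
      using geometric_level_between[OF assms(1,2), of "ppu P" r L] ppu_pos ppu_le_r by auto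
    moreover have "0 \<le> r * a ^ i"
      using ppu_pos ppu_le_r assms(1) by simp
    ultimately show ?thesis
      using lower_price_profit_ge[of a P "r * a ^ i" C n] assms(1) by auto
  next
    case False
    obtain j where j: "j \<in> {1..n}" "ppu (C j) = r"
      unfolding r using Max_in[of "ppu ` C ` {1..n}"] k(1) by fastforce
    have "profit C n P \<le> ppu P * real n"
      using ppu_pos by (intro profit_le_ppu_mult_n) simp
    also have "\<dots> \<le> r * a ^ L * real n"
      using False by (intro mult_right_mono) auto
    also have "\<dots> = r * (a ^ L * real n)" by (simp only: mult.assoc)
    also have "\<dots> \<le> r" using assms(3) ppu_pos ppu_le_r by (simp add: mult_left_le)
    also have "\<dots> \<le> profit C n (C j)"
      using ppu_le_profit_of_customer[of j n C] j ppu_pos ppu_le_r by simp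
    finally have "profit C n P \<le> profit C n (C j)" .
    moreover have "a * profit C n P \<le> profit C n P"
      using profitable assms(1,2) by (intro mult_left_le_one_le) auto
    ultimately have "a * profit C n P \<le> profit C n (C j)" by linarith
    then have "ppu (C j) = r * a ^ 0 \<and> a * profit C n P \<le> profit C n (C j)"
      using j(2) by simp
    then show ?thesis by blast
  qed
qed

theorem lemma3:
  fixes \<epsilon> :: real and C :: "nat \<Rightarrow> point3" and n :: nat and Pstar :: point3
  assumes "0 < \<epsilon>" and "\<epsilon> < 1" and "n \<ge> 1"
    and "pareto_optimal C n"
  shows "let r = Max (ppu ` C ` {1..n}); E = 1 / (1 - \<epsilon>); l = \<lceil>log E (real n)\<rceil> in
    \<exists>i::nat. int i \<le> l \<and> (\<exists>P. ppu P = r * (1 - \<epsilon>) ^ i \<and>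
       profit C n P \<ge> (1 - \<epsilon>) * profit C n Pstar)"
proof -
  define r where "r = Max (ppu ` C ` {1..n})"
  define l where "l = \<lceil>log (1 / (1 - \<epsilon>)) (real n)\<rceil>"
  have "1 < 1 / (1 - \<epsilon>)" using assms by simp
  then have "0 \<le> log (1 / (1 - \<epsilon>)) (real n)" using assms(3) by simp
  then have "0 \<le> l" unfolding l_def by simp
  have bound: "(1 - \<epsilon>) ^ nat l * real n \<le> 1"
    unfolding l_def using assms by (intro pow_nat_ceiling_log_inverse_le) auto
  have "\<exists>i\<le>nat l. \<exists>P. ppu P = r * (1 - \<epsilon>) ^ i \<and> (1 - \<epsilon>) * profit C n Pstar \<le> profit C n P"
  proof (cases "profit C n Pstar \<le> 0")
    case True
    obtain P where "ppu P = r * (1 - \<epsilon>) ^ 0" and "profit C n P = 0"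
      using exists_unsold_product by blast
    moreover have "(1 - \<epsilon>) * profit C n Pstar \<le> 0"
      using True assms(2) by (intro mult_nonneg_nonpos) auto
    ultimately have "ppu P = r * (1 - \<epsilon>) ^ 0 \<and> (1 - \<epsilon>) * profit C n Pstar \<le> profit C n P"
      by simp
    then show ?thesis by blast
  next
    case False
    then show ?thesis
      by (intro profitable_product_approx_on_levels[OF _ _ bound r_def]) (use assms in auto)
  qed
  then obtain i P where "i \<le> nat l" "ppu P = r * (1 - \<epsilon>) ^ i"
    "(1 - \<epsilon>) * profit C n Pstar \<le> profit C n P"
    by blast
  moreover have "int i \<le> l" using \<open>i \<le> nat l\<close> \<open>0 \<le> l\<close> by linarith
  ultimately have "\<exists>i. int i \<le> l \<and> (\<exists>P. ppu P = r * (1 - \<epsilon>) ^ i \<and>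
      (1 - \<epsilon>) * profit C n Pstar \<le> profit C n P)"
    by blast
  then show ?thesis by (simp only: Let_def r_def l_def)
qed

end
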